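(* Let $G=(V,E)$ be a finite connected undirected graph with probability weights $w:E\to\mathbb{R}_{>0}$ and degree weights $\omega:E\to\mathbb{R}$, and let $r\in V$ be arbitrary. Let $T$ be a random spanning tree of $G$ with $\Pr(T)\propto\prod_{e\in E_T}w(e)$. For a node $v\in V$, $$\mathbb{E}\big[\deg^{\omega}_T(v)\big]=\operatorname{Tr}\Big[\big(L^{(1)}_v\big)^{[r]}\big(L_G^{[r]}\big)^{-1}\Big],$$ $$\operatorname{Var}\big[\deg^{\omega}_T(v)\big]=\operatorname{Tr}\Big[\Big(\big(L^{(2)}_v\big)^{[r]}-\big(L^{(1)}_v\big)^{[r]}\big(L_G^{[r]}\big)^{-1}\big(L^{(1)}_v\big)^{[r]}\Big)\big(L_G^{[r]}\big)^{-1}\Big].$$ Moreover, for a second node $u\in V$, $u\neq v$, $$\operatorname{Cov}\big(\deg^{\omega}_T(v),\deg^{\omega}_T(u)\big)=\operatorname{Tr}\Big[\Big(\big(L^{(2)}_{vu}\big)^{[r]}-\big(L^{(1)}_v\big)^{[r]}\big(L_G^{[r]}\big)^{-1}\big(L^{(1)}_u\big)^{[r]}\Big)\big(L_G^{[r]}\big)^{-1}\Big].$$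
   Context: For an edge weight function $c:E\to\mathbb{R}$ on $G$, its Laplacian is $L=D-A$ where $A_{ij}=c(\{i,j\})$ (zero if $\{i,j\}\notin E$) and $D$ is diagonal with $D_{ii}=\sum_j A_{ij}$. $L_G$ is the Laplacian for the weights $w$. For a node $v$ and $p\in\{1,2\}$, $L^{(p)}_v$ is the Laplacian for the weights $c(e)=w(e)\omega(e)^p$ if $v\in e$ and $c(e)=0$ otherwise (i.e. only edges incident to $v$ kept, with weights scaled by $\omega^p$). $L^{(2)}_{vu}$ is the Laplacian for the weights $c(\{u,v\})=w(\{u,v\})\omega(\{u,v\})^2$ and $c(e)=0$ for all other edges (the zero matrix if $\{u,v\}\notin E$). For a matrix $M$ indexed by $V$, $M^{[r]}$ is $M$ with the row and column indexed by $r$ removed. The weighted degree of $v$ in $T$ is $\deg^{\omega}_T(v)=\sum_{e\in E_T,\, v\in e}\omega(e)$, and $\operatorname{Tr}$ is the trace. *)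

theory Defs
  imports Complex_Main
begin

definition simple_graph :: "'a set \<Rightarrow> 'a set set \<Rightarrow> bool" where
  "simple_graph V E \<longleftrightarrow> finite V \<and> (\<forall>e\<in>E. \<exists>x y. x \<in> V \<and> y \<in> V \<and> x \<noteq> y \<and> e = {x, y})"

definition adj :: "'a set set \<Rightarrow> 'a \<Rightarrow> 'a \<Rightarrow> bool" where
  "adj F x y \<longleftrightarrow> {x, y} \<in> F"

definition connected_on :: "'a set \<Rightarrow> 'a set set \<Rightarrow> bool" where
  "connected_on V F \<longleftrightarrow> (\<forall>x\<in>V. \<forall>y\<in>V. (adj F)\<^sup>*\<^sup>* x y)"

definition acyclic_edges :: "'a set set \<Rightarrow> bool" where
  "acyclic_edges F \<longleftrightarrow> (\<forall>x y. {x, y} \<in> F \<longrightarrow> \<not> (adj (F - {{x, y}}))\<^sup>*\<^sup>* x y)"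

definition spanning_trees :: "'a set \<Rightarrow> 'a set set \<Rightarrow> 'a set set set" where
  "spanning_trees V E = {T. T \<subseteq> E \<and> connected_on V T \<and> acyclic_edges T}"

definition tree_weight :: "('a set \<Rightarrow> real) \<Rightarrow> 'a set set \<Rightarrow> real" where
  "tree_weight w T = (\<Prod>e\<in>T. w e)"

definition rst_expectation :: "'a set \<Rightarrow> 'a set set \<Rightarrow> ('a set \<Rightarrow> real) \<Rightarrow> ('a set set \<Rightarrow> real) \<Rightarrow> real" where
  "rst_expectation V E w f =
     (\<Sum>T\<in>spanning_trees V E. tree_weight w T * f T) / (\<Sum>T\<in>spanning_trees V E. tree_weight w T)"

definition rst_variance :: "'a set \<Rightarrow> 'a set set \<Rightarrow> ('a set \<Rightarrow> real) \<Rightarrow> ('a set set \<Rightarrow> real) \<Rightarrow> real" where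
  "rst_variance V E w f = rst_expectation V E w (\<lambda>T. (f T - rst_expectation V E w f)\<^sup>2)"

definition rst_covariance :: "'a set \<Rightarrow> 'a set set \<Rightarrow> ('a set \<Rightarrow> real) \<Rightarrow> ('a set set \<Rightarrow> real) \<Rightarrow> ('a set set \<Rightarrow> real) \<Rightarrow> real" where
  "rst_covariance V E w f g =
     rst_expectation V E w (\<lambda>T. (f T - rst_expectation V E w f) * (g T - rst_expectation V E w g))"

definition wdeg :: "('a set \<Rightarrow> real) \<Rightarrow> 'a set set \<Rightarrow> 'a \<Rightarrow> real" where
  "wdeg \<omega> T v = (\<Sum>e\<in>{e\<in>T. v \<in> e}. \<omega> e)"

(* Matrices indexed by a finite set: functions 'a => 'a => real; only entries with
   both indices in the index set S are meaningful. *)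
type_synonym 'a smat = "'a \<Rightarrow> 'a \<Rightarrow> real"

definition laplacian :: "'a set \<Rightarrow> 'a set set \<Rightarrow> ('a set \<Rightarrow> real) \<Rightarrow> 'a smat" where
  "laplacian V E c = (\<lambda>i j.
     let A = (\<lambda>i j. if {i, j} \<in> E then c {i, j} else 0)
     in (if i = j then (\<Sum>k\<in>V. A i k) else 0) - A i j)"

definition lap_G :: "'a set \<Rightarrow> 'a set set \<Rightarrow> ('a set \<Rightarrow> real) \<Rightarrow> 'a smat" where
  "lap_G V E w = laplacian V E w"

definition lap_v :: "'a set \<Rightarrow> 'a set set \<Rightarrow> ('a set \<Rightarrow> real) \<Rightarrow> ('a set \<Rightarrow> real) \<Rightarrow> nat \<Rightarrow> 'a \<Rightarrow> 'a smat" where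
  "lap_v V E w \<omega> p v = laplacian V E (\<lambda>e. if v \<in> e then w e * \<omega> e ^ p else 0)"

definition lap_vu :: "'a set \<Rightarrow> 'a set set \<Rightarrow> ('a set \<Rightarrow> real) \<Rightarrow> ('a set \<Rightarrow> real) \<Rightarrow> 'a \<Rightarrow> 'a \<Rightarrow> 'a smat" where
  "lap_vu V E w \<omega> v u = laplacian V E (\<lambda>e. if e = {u, v} then w e * \<omega> e ^ 2 else 0)"

(* Matrix operations on matrices indexed by S (S = V - {r} realises M^[r]) *)
definition smat_mult :: "'a set \<Rightarrow> 'a smat \<Rightarrow> 'a smat \<Rightarrow> 'a smat" where
  "smat_mult S M N = (\<lambda>i j. \<Sum>k\<in>S. M i k * N k j)"

definition smat_minus :: "'a smat \<Rightarrow> 'a smat \<Rightarrow> 'a smat" where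
  "smat_minus M N = (\<lambda>i j. M i j - N i j)"

definition smat_trace :: "'a set \<Rightarrow> 'a smat \<Rightarrow> real" where
  "smat_trace S M = (\<Sum>i\<in>S. M i i)"

definition smat_inv :: "'a set \<Rightarrow> 'a smat \<Rightarrow> 'a smat" where
  "smat_inv S M = (THE N. (\<forall>i\<in>S. \<forall>j\<in>S. (\<Sum>k\<in>S. M i k * N k j) = (if i = j then 1 else 0))
                        \<and> (\<forall>i j. i \<notin> S \<or> j \<notin> S \<longrightarrow> N i j = 0))"

end

theory Submission
  imports Defs "Jordan_Normal_Form.Determinant"
begin

(*
  Write L for the Laplacian of the weights w, L_s for that of the weights w * s (s any edge
  function), and C_s = (L^[r])^-1 L_s^[r]. The Laplacian of the weights w * (1 + t * s) is
  L + t * L_s, so by the matrix-tree theorem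
    det (I + t * C_s) = E [prod_{e in T} (1 + t * s e)]
  for the random spanning tree T. The coefficients of t and t^2 give
    E [sum_{e in T} s e] = tr C_s,
    E [(sum_{e in T} s e)^2 - sum_{e in T} (s e)^2] = (tr C_s)^2 - tr (C_s^2),
  and polarizing the second identity gives the mixed moments of two edge sums. The weighted
  degree of v is the edge sum of s e = (if v in e then omega e else 0), so the expectation,
  variance and covariance formulas follow by cyclicity of the trace.

  The matrix-tree theorem itself is proved by expanding every row of L^[r] over the neighbours of
  its vertex: this leaves one determinant det (I - P_phi) for each parent map
  phi : V - {r} -> V along edges, which is 1 if phi has no cycle, i.e. if its edges form a
  spanning tree, and 0 otherwise.
*)

section \<open>Determinants of matrices indexed by a finite set\<close>

definition sdet :: "'a set \<Rightarrow> 'a smat \<Rightarrow> real" where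
  "sdet S M = (\<Sum>\<sigma> | \<sigma> permutes S. real_of_int (sign \<sigma>) * (\<Prod>i\<in>S. M i (\<sigma> i)))"

lemma sdet_cong:
  assumes "\<And>i j. i \<in> S \<Longrightarrow> j \<in> S \<Longrightarrow> M i j = N i j"
  shows "sdet S M = sdet S N"
  unfolding sdet_def
proof (intro sum.cong refl)
  fix \<sigma> assume "\<sigma> \<in> {\<sigma>. \<sigma> permutes S}"
  then have "\<And>i. i \<in> S \<Longrightarrow> \<sigma> i \<in> S" by (simp add: permutes_in_image)
  then show "real_of_int (sign \<sigma>) * (\<Prod>i\<in>S. M i (\<sigma> i)) = real_of_int (sign \<sigma>) * (\<Prod>i\<in>S. N i (\<sigma> i))"
    using assms by auto
qed

lemma sdet_empty [simp]: "sdet {} M = 1"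
  unfolding sdet_def by simp

lemma sdet_singleton: "sdet {i} M = M i i"
proof -
  have "{\<sigma>. \<sigma> permutes {i}} = {id}" by auto
  then show ?thesis unfolding sdet_def by simp
qed

lemma permutes_doubleton:
  assumes "i \<noteq> j"
  shows "{\<sigma>. \<sigma> permutes {i, j}} = {id, Transposition.transpose i j}"
proof (intro Set.set_eqI iffI)
  fix \<sigma> assume "\<sigma> \<in> {\<sigma>. \<sigma> permutes {i, j}}"
  then have p: "\<sigma> permutes {i, j}" by simp
  have "\<sigma> i \<in> {i, j}" "\<sigma> j \<in> {i, j}"
    using permutes_in_image[OF p] by auto
  moreover have "\<sigma> i \<noteq> \<sigma> j" using p assms by (metis permutes_inj injD)
  moreover have "\<And>x. x \<notin> {i, j} \<Longrightarrow> \<sigma> x = x" using p permutes_not_in by metis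
  ultimately have "\<sigma> = id \<or> \<sigma> = Transposition.transpose i j"
    by (auto simp: fun_eq_iff Transposition.transpose_def) metis+
  then show "\<sigma> \<in> {id, Transposition.transpose i j}" by simp
qed (auto intro: permutes_swap_id)

lemma sdet_doubleton:
  assumes "i \<noteq> j"
  shows "sdet {i, j} M = M i i * M j j - M i j * M j i"
proof -
  have "id \<noteq> Transposition.transpose i j" using assms by (metis id_apply transpose_apply_first)
  then show ?thesis
    unfolding sdet_def permutes_doubleton[OF assms] using assms by (simp add: sign_swap_id)
qed

lemma sdet_eq_det_mat:
  assumes g: "bij_betw g {0..<n} S"
  shows "sdet S M = det (mat n n (\<lambda>(i, j). M (g i) (g j)))"
proof -
  have inj: "inj_on g {0..<n}" using g bij_betw_def by blast
  let ?h = "inv_into {0..<n} g"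
  have h: "bij_betw ?h S {0..<n}" using g by (rule bij_betw_inv_into)
  have "det (mat n n (\<lambda>(i, j). M (g i) (g j))) =
     (\<Sum>p | p permutes {0..<n}. of_int (sign p) * (\<Prod>i=0..<n. M (g i) (g (p i))))"
    by (subst det_def') auto
  also have "\<dots> = sdet S M"
    unfolding sdet_def
  proof (rule sum.reindex_bij_witness[where i="map_permutation S ?h" and j="map_permutation {0..<n} g"])
    fix p assume "p \<in> {p. p permutes {0..<n}}"
    then have p: "p permutes {0..<n}" by simp
    show "map_permutation S ?h (map_permutation {0..<n} g p) = p"
      by (rule map_permutation_compose_inv[OF g p]) (use inj in auto)
    show "map_permutation {0..<n} g p \<in> {\<sigma>. \<sigma> permutes S}"
      using map_permutation_permutes[OF g p] by simp
    have "(\<Prod>i\<in>S. M i (map_permutation {0..<n} g p i)) =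
          (\<Prod>i=0..<n. M (g i) (map_permutation {0..<n} g p (g i)))"
      using prod.reindex_bij_betw[OF g, of "\<lambda>i. M i (map_permutation {0..<n} g p i)"] by simp
    also have "\<dots> = (\<Prod>i=0..<n. M (g i) (g (p i)))"
      by (intro prod.cong refl) (simp add: map_permutation_apply[OF inj])
    finally show "real_of_int (sign (map_permutation {0..<n} g p)) *
        (\<Prod>i\<in>S. M i (map_permutation {0..<n} g p i)) =
        of_int (sign p) * (\<Prod>i = 0..<n. M (g i) (g (p i)))"
      using sign_map_permutation[OF inj p] by simp
  next
    fix \<sigma> assume "\<sigma> \<in> {\<sigma>. \<sigma> permutes S}"
    then have \<sigma>: "\<sigma> permutes S" by simp
    show "map_permutation {0..<n} g (map_permutation S ?h \<sigma>) = \<sigma>"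
      by (rule map_permutation_compose_inv[OF h \<sigma>])
        (use g in \<open>auto simp: bij_betw_inv_into_right\<close>)
    show "map_permutation S ?h \<sigma> \<in> {p. p permutes {0..<n}}"
      using map_permutation_permutes[OF h \<sigma>] by simp
  qed
  finally show ?thesis ..
qed

lemma sdet_mult:
  assumes "finite S"
  shows "sdet S (smat_mult S M N) = sdet S M * sdet S N"
proof -
  obtain g where g: "bij_betw g {0..<card S} S"
    using ex_bij_betw_nat_finite[OF assms] by blast
  let ?n = "card S"
  let ?mat = "\<lambda>M. mat ?n ?n (\<lambda>(i, j). M (g i) (g j))"
  have "?mat (smat_mult S M N) = ?mat M * ?mat N"
    by (rule eq_matI)
      (auto simp: smat_mult_def scalar_prod_def sum.reindex_bij_betw[OF g, symmetric])
  then show ?thesis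
    by (simp add: sdet_eq_det_mat[OF g] det_mult[of _ ?n])
qed

lemma kernel_trivial_if_sdet_nonzero:
  assumes fin: "finite S" and "sdet S M \<noteq> 0"
    and kernel: "\<And>i. i \<in> S \<Longrightarrow> (\<Sum>j\<in>S. M i j * x j) = 0"
    and "j \<in> S"
  shows "x j = 0"
proof -
  obtain g where g: "bij_betw g {0..<card S} S"
    using ex_bij_betw_nat_finite[OF fin] by blast
  let ?n = "card S"
  let ?A = "mat ?n ?n (\<lambda>(i, j). M (g i) (g j))"
  let ?x = "vec ?n (\<lambda>k. x (g k))"
  have gS: "\<And>i. i < ?n \<Longrightarrow> g i \<in> S" using g bij_betwE by fastforce
  have "det ?A \<noteq> 0" using assms(2) sdet_eq_det_mat[OF g] by simp
  moreover have "?A *\<^sub>v ?x = 0\<^sub>v ?n"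
    by (rule eq_vecI)
      (auto simp: scalar_prod_def kernel[OF gS] sum.reindex_bij_betw[OF g, of "\<lambda>k. M _ k * x k"])
  ultimately have "?x = 0\<^sub>v ?n"
    using det_0_iff_vec_prod_zero_field[of ?A ?n] by (metis mat_carrier vec_carrier)
  moreover obtain k where "k < ?n" "g k = j" using g \<open>j \<in> S\<close>
    by (metis atLeastLessThan_iff bij_betw_iff_bijections)
  ultimately show ?thesis by (metis index_vec index_zero_vec(1))
qed

lemma sdet_eq_0_if_row_sums_0:
  assumes "finite S" "S \<noteq> {}" "\<And>i. i \<in> S \<Longrightarrow> (\<Sum>j\<in>S. M i j) = 0"
  shows "sdet S M = 0"
  using kernel_trivial_if_sdet_nonzero[OF assms(1), of M "\<lambda>_. 1"] assms(2,3) by auto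

lemma sum_permutes_fixing_outside:
  assumes "finite S" "K \<subseteq> S"
  shows "(\<Sum>\<sigma> | \<sigma> permutes S. if \<forall>i\<in>S - K. \<sigma> i = i then f \<sigma> else 0) = (\<Sum>\<sigma> | \<sigma> permutes K. f \<sigma>)"
proof -
  have "{\<sigma>. \<sigma> permutes S \<and> (\<forall>i\<in>S - K. \<sigma> i = i)} = {\<sigma>. \<sigma> permutes K}"
    using assms(2) by (auto intro: permutes_superset permutes_subset dest: permutes_not_in)
  then show ?thesis
    using sum.inter_filter[OF finite_permutations[OF assms(1)], of f "\<lambda>\<sigma>. \<forall>i\<in>S - K. \<sigma> i = i"]
    by simp
qed

lemma sdet_diagonal_column:
  assumes fin: "finite S" and j: "j \<in> S" and col: "\<And>i. i \<in> S \<Longrightarrow> i \<noteq> j \<Longrightarrow> M i j = 0"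
  shows "sdet S M = M j j * sdet (S - {j}) M"
proof -
  have "real_of_int (sign \<sigma>) * (\<Prod>i\<in>S. M i (\<sigma> i)) =
      (if \<forall>i\<in>S - (S - {j}). \<sigma> i = i then M j j * (real_of_int (sign \<sigma>) * (\<Prod>i\<in>S - {j}. M i (\<sigma> i))) else 0)"
    if \<sigma>: "\<sigma> permutes S" for \<sigma>
  proof (cases "\<sigma> j = j")
    case True
    then show ?thesis using prod.remove[OF fin j, of "\<lambda>i. M i (\<sigma> i)"] j by auto
  next
    case False
    let ?i = "Hilbert_Choice.inv \<sigma> j"
    have "\<sigma> ?i = j" "?i \<in> S"
      using \<sigma> j by (auto simp: permutes_inverses(1) permutes_inv permutes_in_image)
    then have "M ?i (\<sigma> ?i) = 0" using col False by metis
    then show ?thesis using fin \<open>?i \<in> S\<close> False j by (auto simp: prod_zero_iff)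
  qed
  then have "sdet S M =
      (\<Sum>\<sigma> | \<sigma> permutes S. if \<forall>i\<in>S - (S - {j}). \<sigma> i = i
         then M j j * (real_of_int (sign \<sigma>) * (\<Prod>i\<in>S - {j}. M i (\<sigma> i))) else 0)"
    unfolding sdet_def by (intro sum.cong) auto
  also have "\<dots> = M j j * sdet (S - {j}) M"
    unfolding sum_permutes_fixing_outside[OF fin Diff_subset] sdet_def by (simp add: sum_distrib_left)
  finally show ?thesis .
qed

lemma sdet_sum_rows:
  assumes "finite S" "finite K"
  shows "sdet S (\<lambda>i j. \<Sum>k\<in>K. a i k * b i k j) =
    (\<Sum>\<phi>\<in>S \<rightarrow>\<^sub>E K. (\<Prod>i\<in>S. a i (\<phi> i)) * sdet S (\<lambda>i j. b i (\<phi> i) j))"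
proof -
  have "sdet S (\<lambda>i j. \<Sum>k\<in>K. a i k * b i k j) =
     (\<Sum>\<sigma> | \<sigma> permutes S. \<Sum>\<phi>\<in>S \<rightarrow>\<^sub>E K. real_of_int (sign \<sigma>) *
        ((\<Prod>i\<in>S. a i (\<phi> i)) * (\<Prod>i\<in>S. b i (\<phi> i) (\<sigma> i))))"
    unfolding sdet_def by (simp add: prod_sum_PiE[OF assms] prod.distrib sum_distrib_left)
  also have "\<dots> = (\<Sum>\<phi>\<in>S \<rightarrow>\<^sub>E K. \<Sum>\<sigma> | \<sigma> permutes S. real_of_int (sign \<sigma>) *
        ((\<Prod>i\<in>S. a i (\<phi> i)) * (\<Prod>i\<in>S. b i (\<phi> i) (\<sigma> i))))"
    by (rule sum.swap)
  also have "\<dots> = (\<Sum>\<phi>\<in>S \<rightarrow>\<^sub>E K. (\<Prod>i\<in>S. a i (\<phi> i)) * sdet S (\<lambda>i j. b i (\<phi> i) j))"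
    unfolding sdet_def by (simp add: sum_distrib_left algebra_simps)
  finally show ?thesis .
qed

lemma prod_delta_plus_expand:
  fixes C :: "'a smat"
  assumes "finite S"
  shows "(\<Prod>i\<in>S. (if i = \<sigma> i then 1 else 0) + t * C i (\<sigma> i)) =
    (\<Sum>K\<in>Pow S. if \<forall>i\<in>S - K. \<sigma> i = i then t ^ card K * (\<Prod>i\<in>K. C i (\<sigma> i)) else 0)"
proof -
  have "(\<Prod>i\<in>S. (if i = \<sigma> i then 1 else 0) + t * C i (\<sigma> i)) =
      (\<Sum>K\<in>Pow S. (\<Prod>i\<in>K. t * C i (\<sigma> i)) * (\<Prod>i\<in>S - K. if i = \<sigma> i then 1 else 0))"
    using prod_add[OF assms, of "\<lambda>i. t * C i (\<sigma> i)" "\<lambda>i. if i = \<sigma> i then 1 else 0"]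
    by (simp add: add.commute)
  also have "\<dots> = (\<Sum>K\<in>Pow S. if \<forall>i\<in>S - K. \<sigma> i = i then t ^ card K * (\<Prod>i\<in>K. C i (\<sigma> i)) else 0)"
  proof (intro sum.cong refl)
    fix K assume "K \<in> Pow S"
    then have "finite (S - K)" using assms by simp
    then have "(\<Prod>i\<in>S - K. if i = \<sigma> i then 1 else 0 :: real) = (if \<forall>i\<in>S - K. \<sigma> i = i then 1 else 0)"
      by (auto simp: prod_zero_iff intro!: prod.neutral) (metis DiffI)
    then show "(\<Prod>i\<in>K. t * C i (\<sigma> i)) * (\<Prod>i\<in>S - K. if i = \<sigma> i then 1 else 0) =
        (if \<forall>i\<in>S - K. \<sigma> i = i then t ^ card K * (\<Prod>i\<in>K. C i (\<sigma> i)) else 0)"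
      by (simp add: prod.distrib)
  qed
  finally show ?thesis .
qed

lemma sdet_id_plus_eq_sum_principal_minors:
  assumes fin: "finite S"
  shows "sdet S (\<lambda>i j. (if i = j then 1 else 0) + t * C i j) = (\<Sum>K\<in>Pow S. t ^ card K * sdet K C)"
proof -
  have "sdet S (\<lambda>i j. (if i = j then 1 else 0) + t * C i j) =
     (\<Sum>K\<in>Pow S. \<Sum>\<sigma> | \<sigma> permutes S. if \<forall>i\<in>S - K. \<sigma> i = i
        then t ^ card K * (real_of_int (sign \<sigma>) * (\<Prod>i\<in>K. C i (\<sigma> i))) else 0)"
    unfolding sdet_def prod_delta_plus_expand[OF fin] sum_distrib_left
    by (subst sum.swap) (intro sum.cong refl, simp add: algebra_simps)
  also have "\<dots> = (\<Sum>K\<in>Pow S. t ^ card K * sdet K C)"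
    using fin by (intro sum.cong refl)
      (simp add: sum_permutes_fixing_outside sdet_def sum_distrib_left)
  finally show ?thesis .
qed

lemma smat_right_inverse_exists:
  assumes fin: "finite S" and "sdet S A \<noteq> 0"
  obtains N where "\<And>i j. i \<in> S \<Longrightarrow> j \<in> S \<Longrightarrow> (\<Sum>k\<in>S. A i k * N k j) = (if i = j then 1 else 0)"
    and "\<And>i j. i \<notin> S \<or> j \<notin> S \<Longrightarrow> N i j = 0"
proof -
  obtain g where g: "bij_betw g {0..<card S} S"
    using ex_bij_betw_nat_finite[OF fin] by blast
  let ?n = "card S"
  let ?A = "mat ?n ?n (\<lambda>(i, j). A (g i) (g j))"
  let ?h = "inv_into {0..<?n} g"
  have gS: "\<And>k. k < ?n \<Longrightarrow> g k \<in> S" using g bij_betwE by fastforce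
  have hg: "\<And>k. k < ?n \<Longrightarrow> ?h (g k) = k" using g by (simp add: bij_betw_inv_into_left)
  have gh: "\<And>i. i \<in> S \<Longrightarrow> g (?h i) = i" using g by (simp add: bij_betw_inv_into_right)
  have hS: "\<And>i. i \<in> S \<Longrightarrow> ?h i < ?n"
    using bij_betw_inv_into[OF g] by (metis atLeastLessThan_iff bij_betwE)
  have "det ?A \<noteq> 0" using assms(2) sdet_eq_det_mat[OF g] by simp
  then have "?A \<in> Units (ring_mat TYPE(real) ?n undefined)"
    by (intro det_non_zero_imp_unit) simp
  then obtain B where B: "B \<in> carrier_mat ?n ?n" and AB: "?A * B = 1\<^sub>m ?n"
    unfolding Units_def by (auto simp: ring_mat_simps)
  define N where "N i j = (if i \<in> S \<and> j \<in> S then B $$ (?h i, ?h j) else 0)" for i j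
  have "(\<Sum>k\<in>S. A i k * N k j) = (if i = j then 1 else 0)" if i: "i \<in> S" and j: "j \<in> S" for i j
  proof -
    have "(\<Sum>k\<in>S. A i k * N k j) = (\<Sum>k=0..<?n. A i (g k) * N (g k) j)"
      by (rule sum.reindex_bij_betw[OF g, symmetric])
    also have "\<dots> = (\<Sum>k=0..<?n. ?A $$ (?h i, k) * B $$ (k, ?h j))"
      using hS[OF i] gS hg gh[OF i] j by (intro sum.cong refl) (simp add: N_def)
    also have "\<dots> = (?A * B) $$ (?h i, ?h j)"
      using hS[OF i] hS[OF j] B by (simp add: scalar_prod_def)
    also have "\<dots> = (if ?h i = ?h j then 1 else 0)"
      unfolding AB using hS[OF i] hS[OF j] by simp
    also have "?h i = ?h j \<longleftrightarrow> i = j"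
      using gh[OF i] gh[OF j] by metis
    finally show ?thesis .
  qed
  moreover have "\<And>i j. i \<notin> S \<or> j \<notin> S \<Longrightarrow> N i j = 0" by (auto simp: N_def)
  ultimately show ?thesis using that by blast
qed

lemma smat_inv_right_inverse:
  assumes fin: "finite S" and nonsingular: "sdet S A \<noteq> 0" and "i \<in> S" "j \<in> S"
  shows "(\<Sum>k\<in>S. A i k * smat_inv S A k j) = (if i = j then 1 else 0)"
proof -
  let ?inverse = "\<lambda>N. (\<forall>i\<in>S. \<forall>j\<in>S. (\<Sum>k\<in>S. A i k * N k j) = (if i = j then 1 else 0))
                       \<and> (\<forall>i j. i \<notin> S \<or> j \<notin> S \<longrightarrow> N i j = 0)"
  obtain N where N: "?inverse N"
    using smat_right_inverse_exists[OF fin nonsingular] by metis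
  have "N' = N" if N': "?inverse N'" for N'
  proof (intro ext)
    fix k j
    show "N' k j = N k j"
    proof (cases "k \<in> S \<and> j \<in> S")
      case True
      have "(\<Sum>l\<in>S. A i l * (N' l j - N l j)) = 0" if "i \<in> S" for i
        using N N' that True by (simp add: right_diff_distrib sum_subtractf)
      then have "N' k j - N k j = 0"
        using kernel_trivial_if_sdet_nonzero[OF fin nonsingular, of "\<lambda>l. N' l j - N l j" k] True
        by blast
      then show ?thesis by simp
    qed (use N N' in auto)
  qed
  then have "?inverse (smat_inv S A)"
    unfolding smat_inv_def using theI[of ?inverse N] N by blast
  then show ?thesis using assms(3,4) by blast
qed

lemma smat_mult_assoc:
  "smat_mult S (smat_mult S X Y) Z = smat_mult S X (smat_mult S Y Z)"
proof (intro ext)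
  fix i j
  have "smat_mult S (smat_mult S X Y) Z i j = (\<Sum>k\<in>S. \<Sum>l\<in>S. X i l * Y l k * Z k j)"
    unfolding smat_mult_def by (simp only: sum_distrib_right)
  also have "\<dots> = (\<Sum>l\<in>S. \<Sum>k\<in>S. X i l * Y l k * Z k j)" by (rule sum.swap)
  also have "\<dots> = smat_mult S X (smat_mult S Y Z) i j"
    unfolding smat_mult_def by (simp only: sum_distrib_left mult.assoc)
  finally show "smat_mult S (smat_mult S X Y) Z i j = smat_mult S X (smat_mult S Y Z) i j" .
qed

lemma smat_mult_id_right:
  assumes "finite S" "j \<in> S"
  shows "smat_mult S M (\<lambda>i j. if i = j then 1 else 0) i j = M i j"
  using assms by (simp add: smat_mult_def if_distrib[of "\<lambda>x. _ * x"] cong: if_cong)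

lemma smat_mult_id_left:
  assumes "finite S" "i \<in> S"
  shows "smat_mult S (\<lambda>i j. if i = j then 1 else 0) M i j = M i j"
  using assms by (simp add: smat_mult_def if_distrib[of "\<lambda>x. x * _"] cong: if_cong)

lemma smat_trace_mult_commute: "smat_trace S (smat_mult S X Y) = smat_trace S (smat_mult S Y X)"
  unfolding smat_trace_def smat_mult_def by (subst sum.swap) (simp only: mult.commute)

lemma smat_trace_mult_minus_left:
  "smat_trace S (smat_mult S (smat_minus X Y) Z) =
   smat_trace S (smat_mult S X Z) - smat_trace S (smat_mult S Y Z)"
  unfolding smat_trace_def smat_mult_def smat_minus_def
  by (simp add: left_diff_distrib sum_subtractf)

section \<open>Parent maps and the matrix-tree theorem\<close>

(* A rank decreasing along every step of \<phi> that stays in S exists iff iterating \<phi> from any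
   point of S eventually leaves S. *)
definition acyclic_map :: "'a set \<Rightarrow> ('a \<Rightarrow> 'a) \<Rightarrow> bool" where
  "acyclic_map S \<phi> \<longleftrightarrow> (\<exists>h :: 'a \<Rightarrow> nat. \<forall>i\<in>S. \<phi> i \<in> S \<longrightarrow> h (\<phi> i) < h i)"

lemma acyclic_map_remove_source:
  assumes "j \<in> S" and source: "\<And>i. i \<in> S \<Longrightarrow> \<phi> i \<noteq> j"
  shows "acyclic_map S \<phi> \<longleftrightarrow> acyclic_map (S - {j}) \<phi>"
proof
  assume "acyclic_map S \<phi>"
  then show "acyclic_map (S - {j}) \<phi>" unfolding acyclic_map_def by blast
next
  assume "acyclic_map (S - {j}) \<phi>"
  then obtain h :: "'a \<Rightarrow> nat" where h: "\<forall>i\<in>S - {j}. \<phi> i \<in> S - {j} \<longrightarrow> h (\<phi> i) < h i"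
    unfolding acyclic_map_def by blast
  have "\<forall>i\<in>S. \<phi> i \<in> S \<longrightarrow> (h(j := Suc (h (\<phi> j)))) (\<phi> i) < (h(j := Suc (h (\<phi> j)))) i"
    using h source by auto
  then show "acyclic_map S \<phi>" unfolding acyclic_map_def by blast
qed

lemma not_acyclic_map_if_closed:
  assumes "S \<noteq> {}" and closed: "\<And>i. i \<in> S \<Longrightarrow> \<phi> i \<in> S"
  shows "\<not> acyclic_map S \<phi>"
proof
  assume "acyclic_map S \<phi>"
  then obtain h :: "'a \<Rightarrow> nat" where h: "\<forall>i\<in>S. \<phi> i \<in> S \<longrightarrow> h (\<phi> i) < h i"
    unfolding acyclic_map_def by blast
  obtain m where m: "m \<in> S" "\<And>i. i \<in> S \<Longrightarrow> h m \<le> h i"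
    using ex_has_least_nat[of "\<lambda>i. i \<in> S" _ h] \<open>S \<noteq> {}\<close> by blast
  have "h (\<phi> m) < h m" using h m(1) closed by blast
  moreover have "h m \<le> h (\<phi> m)" using m closed by blast
  ultimately show False by simp
qed

lemma acyclic_map_no_cycle:
  assumes "acyclic_map S \<phi>"
  shows "\<not> (\<lambda>i j. i \<in> S \<and> \<phi> i = j)\<^sup>+\<^sup>+ i i"
proof
  obtain h :: "'a \<Rightarrow> nat" where h: "\<forall>i\<in>S. \<phi> i \<in> S \<longrightarrow> h (\<phi> i) < h i"
    using assms unfolding acyclic_map_def by blast
  have "h j < h i" if "(\<lambda>i j. i \<in> S \<and> \<phi> i = j)\<^sup>+\<^sup>+ i j" "j \<in> S" for i j
    using that
  proof (induction rule: tranclp_induct)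
    case (step j k)
    then show ?case using h by fastforce
  qed (use h in blast)
  moreover assume "(\<lambda>i j. i \<in> S \<and> \<phi> i = j)\<^sup>+\<^sup>+ i i"
  moreover from this have "i \<in> S" by (auto dest: tranclpD)
  ultimately show False by blast
qed

lemma sdet_id_minus_parent_matrix:
  assumes "finite S" and "\<And>i. i \<in> S \<Longrightarrow> \<phi> i \<noteq> i"
  shows "sdet S (\<lambda>i j. (if j = i then 1 else 0) - (if j = \<phi> i then 1 else 0)) =
    (if acyclic_map S \<phi> then 1 else 0)"
  using assms
proof (induction S rule: finite_psubset_induct)
  \<comment> \<open>If some \<open>j\<close> is no \<open>\<phi>\<close>-image, column \<open>j\<close> is the unit
      vector at \<open>j\<close>; otherwise \<open>\<phi>\<close> maps \<open>S\<close> onto itself and all row sums vanish.\<close>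
  case (psubset S)
  let ?M = "\<lambda>i j. (if j = i then 1 else 0) - (if j = \<phi> i then 1 else 0 :: real)"
  show ?case
  proof (cases "\<exists>j\<in>S. \<forall>i\<in>S. \<phi> i \<noteq> j")
    case True
    then obtain j where j: "j \<in> S" and source: "\<And>i. i \<in> S \<Longrightarrow> \<phi> i \<noteq> j" by blast
    have "sdet S ?M = ?M j j * sdet (S - {j}) ?M"
      by (rule sdet_diagonal_column[OF psubset.hyps(1) j]) (use source in auto)
    also have "\<dots> = (if acyclic_map (S - {j}) \<phi> then 1 else 0)"
    proof -
      have "S - {j} \<subset> S" using j by blast
      then show ?thesis using psubset.IH[of "S - {j}"] psubset.prems j by force
    qed
    finally show ?thesis using acyclic_map_remove_source[OF j source] by simp
  next
    case False
    then have "S \<subseteq> \<phi> ` S" by (auto simp: image_iff)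
    then have closed: "\<phi> ` S = S"
      using card_image_le card_subset_eq psubset.hyps(1) by (metis card_mono finite_imageI le_antisym)
    show ?thesis
    proof (cases "S = {}")
      case False
      have "sdet S ?M = 0"
      proof (rule sdet_eq_0_if_row_sums_0[OF psubset.hyps(1) False])
        fix i assume "i \<in> S"
        then show "(\<Sum>j\<in>S. ?M i j) = 0"
          using closed psubset.hyps(1) by (auto simp: sum_subtractf)
      qed
      then show ?thesis using not_acyclic_map_if_closed[OF False] closed by auto
    qed (simp add: acyclic_map_def)
  qed
qed

lemma adj_commute: "adj F x y \<longleftrightarrow> adj F y x"
  unfolding adj_def by (simp add: insert_commute)

lemma rtranclp_adj_sym: "(adj F)\<^sup>*\<^sup>* x y \<Longrightarrow> (adj F)\<^sup>*\<^sup>* y x"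
  by (metis adj_commute rtranclp_converseI conversep_iff predicate2I rtranclp_mono
      predicate2D)

lemma rtranclp_adj_mono: "F \<subseteq> G \<Longrightarrow> (adj F)\<^sup>*\<^sup>* x y \<Longrightarrow> (adj G)\<^sup>*\<^sup>* x y"
  by (metis adj_def predicate2I rtranclp_mono predicate2D subsetD)

lemma simple_graph_finite: "simple_graph V E \<Longrightarrow> finite V"
  unfolding simple_graph_def by blast

lemma simple_graph_edgeE:
  assumes "simple_graph V E" "e \<in> E"
  obtains x y where "x \<in> V" "y \<in> V" "x \<noteq> y" "e = {x, y}"
  using assms unfolding simple_graph_def by blast

lemma simple_graph_edgeD:
  assumes "simple_graph V E" "{a, b} \<in> E"
  shows "a \<in> V" "b \<in> V" "a \<noteq> b"
  using simple_graph_edgeE[OF assms] by (metis doubleton_eq_iff)+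

lemma simple_graph_finite_edges: "simple_graph V E \<Longrightarrow> finite E"
  by (rule finite_subset[of E "Pow V"]) (auto elim: simple_graph_edgeE simp: simple_graph_finite)

lemma finite_spanning_trees: "simple_graph V E \<Longrightarrow> finite (spanning_trees V E)"
  by (rule finite_subset[of _ "Pow E"]) (auto simp: spanning_trees_def simple_graph_finite_edges)

lemma finite_spanning_tree: "simple_graph V E \<Longrightarrow> T \<in> spanning_trees V E \<Longrightarrow> finite T"
  by (auto simp: spanning_trees_def intro: finite_subset simple_graph_finite_edges)

definition parent_maps :: "'a set \<Rightarrow> 'a set set \<Rightarrow> 'a \<Rightarrow> ('a \<Rightarrow> 'a) set" where
  "parent_maps V E r =
     {\<phi> \<in> V - {r} \<rightarrow>\<^sub>E V. (\<forall>i\<in>V - {r}. {i, \<phi> i} \<in> E) \<and> acyclic_map (V - {r}) \<phi>}"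

definition parent_tree :: "'a set \<Rightarrow> 'a \<Rightarrow> ('a \<Rightarrow> 'a) \<Rightarrow> 'a set set" where
  "parent_tree V r \<phi> = (\<lambda>i. {i, \<phi> i}) ` (V - {r})"

lemma parent_mapsD:
  assumes "\<phi> \<in> parent_maps V E r"
  shows "\<phi> \<in> V - {r} \<rightarrow>\<^sub>E V" "\<And>i. i \<in> V - {r} \<Longrightarrow> {i, \<phi> i} \<in> E" "acyclic_map (V - {r}) \<phi>"
  using assms unfolding parent_maps_def by auto

lemma parent_tree_reaches_root:
  assumes \<phi>: "\<phi> \<in> parent_maps V E r" and "i \<in> V"
  shows "(adj (parent_tree V r \<phi>))\<^sup>*\<^sup>* i r"
proof -
  obtain h :: "'a \<Rightarrow> nat" where h: "\<forall>i\<in>V - {r}. \<phi> i \<in> V - {r} \<longrightarrow> h (\<phi> i) < h i"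
    using parent_mapsD(3)[OF \<phi>] unfolding acyclic_map_def by blast
  show ?thesis
    using \<open>i \<in> V\<close>
  proof (induction "h i" arbitrary: i rule: less_induct)
    case less
    show ?case
    proof (cases "i = r")
      case False
      then have "adj (parent_tree V r \<phi>) i (\<phi> i)" "\<phi> i \<in> V"
        using less.prems parent_mapsD(1)[OF \<phi>] unfolding adj_def parent_tree_def by auto
      moreover have "(adj (parent_tree V r \<phi>))\<^sup>*\<^sup>* (\<phi> i) r"
        using less h False \<open>\<phi> i \<in> V\<close> by (cases "\<phi> i = r") auto
      ultimately show ?thesis by (metis converse_rtranclp_into_rtranclp)
    qed simp
  qed
qed

lemma parent_tree_connected:
  assumes "\<phi> \<in> parent_maps V E r"
  shows "connected_on V (parent_tree V r \<phi>)"
  unfolding connected_on_def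
  using parent_tree_reaches_root[OF assms] rtranclp_adj_sym rtranclp_trans by metis

lemma parent_tree_minus_edge_descendants:
  assumes "a \<in> V - {r}" and "(adj (parent_tree V r \<phi> - {{a, \<phi> a}}))\<^sup>*\<^sup>* a b"
  shows "(\<lambda>i j. i \<in> V - {r} \<and> \<phi> i = j)\<^sup>*\<^sup>* b a"
  using assms(2)
proof (induction rule: rtranclp_induct)
  case (step b c)
  have "{b, c} \<in> parent_tree V r \<phi>" "{b, c} \<noteq> {a, \<phi> a}"
    using step.hyps(2) unfolding adj_def by auto
  then obtain d where d: "d \<in> V - {r}" "{b, c} = {d, \<phi> d}" "{b, c} \<noteq> {a, \<phi> a}"
    unfolding parent_tree_def by blast
  show ?case
  proof (cases "b = d")
    case True
    then have "d \<noteq> a" "c = \<phi> d" using d by (auto simp: doubleton_eq_iff)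
    then show ?thesis
      using step.IH True by (auto elim: converse_rtranclpE)
  next
    case False
    then have "b = \<phi> d" "c = d" using d by (auto simp: doubleton_eq_iff)
    then show ?thesis
      using step.IH d(1) by (metis (mono_tags, lifting) converse_rtranclp_into_rtranclp)
  qed
qed simp

lemma parent_tree_acyclic:
  assumes \<phi>: "\<phi> \<in> parent_maps V E r"
  shows "acyclic_edges (parent_tree V r \<phi>)"
proof -
  have no_bypass: "\<not> (adj (parent_tree V r \<phi> - {{a, \<phi> a}}))\<^sup>*\<^sup>* a (\<phi> a)"
    if a: "a \<in> V - {r}" for a
  proof
    let ?R = "\<lambda>i j. i \<in> V - {r} \<and> \<phi> i = j"
    assume "(adj (parent_tree V r \<phi> - {{a, \<phi> a}}))\<^sup>*\<^sup>* a (\<phi> a)"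
    then have "?R\<^sup>*\<^sup>* (\<phi> a) a" by (rule parent_tree_minus_edge_descendants[OF a])
    then have "?R\<^sup>+\<^sup>+ a a" using a by (auto intro: rtranclp_into_tranclp2)
    then show False using acyclic_map_no_cycle[OF parent_mapsD(3)[OF \<phi>]] by blast
  qed
  show ?thesis unfolding acyclic_edges_def
  proof (intro allI impI)
    fix x y assume "{x, y} \<in> parent_tree V r \<phi>"
    then obtain a where "a \<in> V - {r}" "{x, y} = {a, \<phi> a}" unfolding parent_tree_def by auto
    then show "\<not> (adj (parent_tree V r \<phi> - {{x, y}}))\<^sup>*\<^sup>* x y"
      using no_bypass rtranclp_adj_sym by (metis doubleton_eq_iff)
  qed
qed

lemma parent_tree_spanning:
  assumes "\<phi> \<in> parent_maps V E r"
  shows "parent_tree V r \<phi> \<in> spanning_trees V E"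
  using parent_mapsD(2)[OF assms] parent_tree_connected[OF assms] parent_tree_acyclic[OF assms]
  unfolding spanning_trees_def parent_tree_def by blast

lemma inj_on_parent_edge:
  assumes "\<phi> \<in> parent_maps V E r"
  shows "inj_on (\<lambda>i. {i, \<phi> i}) (V - {r})"
proof (rule inj_onI)
  fix i j assume ij: "i \<in> V - {r}" "j \<in> V - {r}" "{i, \<phi> i} = {j, \<phi> j}"
  show "i = j"
  proof (rule ccontr)
    assume "i \<noteq> j"
    then have "\<phi> i = j" "\<phi> j = i" using ij(3) by (auto simp: doubleton_eq_iff)
    then have "(\<lambda>i j. i \<in> V - {r} \<and> \<phi> i = j)\<^sup>+\<^sup>+ i i" using ij(1,2) by (auto intro: tranclp.intros)
    then show False using acyclic_map_no_cycle[OF parent_mapsD(3)[OF assms]] by blast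
  qed
qed

lemma parent_map_in_connected_subgraph:
  assumes G: "simple_graph V E" and "r \<in> V" and "F \<subseteq> E" and conn: "connected_on V F"
  obtains \<phi> where "\<phi> \<in> parent_maps V E r" "\<And>i. i \<in> V - {r} \<Longrightarrow> {i, \<phi> i} \<in> F"
proof -
  define d where "d i = (LEAST n. (adj F ^^ n) i r)" for i
  have closer: "\<exists>j. adj F i j \<and> d j < d i" if i: "i \<in> V - {r}" for i
  proof -
    have "(adj F)\<^sup>*\<^sup>* i r" using conn i \<open>r \<in> V\<close> unfolding connected_on_def by blast
    then obtain n where "(adj F ^^ n) i r" using rtranclp_power by metis
    then have path: "(adj F ^^ d i) i r" unfolding d_def by (rule LeastI)
    then obtain m where m: "d i = Suc m" using i by (cases "d i") auto
    then obtain j where "adj F i j" "(adj F ^^ m) j r" using path by (metis relpowp_Suc_E2)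
    moreover from this have "d j \<le> m" unfolding d_def by (simp add: Least_le)
    ultimately show ?thesis using m by (intro exI[of _ j]) simp
  qed
  define \<phi> where "\<phi> i = (if i \<in> V - {r} then (SOME j. adj F i j \<and> d j < d i) else undefined)" for i
  have \<phi>: "adj F i (\<phi> i) \<and> d (\<phi> i) < d i" if "i \<in> V - {r}" for i
    unfolding \<phi>_def using that someI_ex[OF closer[OF that]] by simp
  then have in_F: "{i, \<phi> i} \<in> F" if "i \<in> V - {r}" for i
    using that unfolding adj_def by blast
  then have in_E: "{i, \<phi> i} \<in> E" if "i \<in> V - {r}" for i
    using that \<open>F \<subseteq> E\<close> by blast
  then have "\<phi> i \<in> V" if "i \<in> V - {r}" for i
    using that simple_graph_edgeD(2)[OF G] by blast
  then have "\<phi> \<in> V - {r} \<rightarrow>\<^sub>E V"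
    unfolding PiE_iff extensional_def by (auto simp: \<phi>_def)
  moreover have "acyclic_map (V - {r}) \<phi>"
    unfolding acyclic_map_def using \<phi> by blast
  ultimately show ?thesis using that in_F in_E unfolding parent_maps_def by blast
qed

lemma spanning_tree_parent_map:
  assumes G: "simple_graph V E" and "r \<in> V" and T: "T \<in> spanning_trees V E"
  obtains \<phi> where "\<phi> \<in> parent_maps V E r" "parent_tree V r \<phi> = T"
proof -
  have "T \<subseteq> E" "connected_on V T" and acyclic: "acyclic_edges T"
    using T unfolding spanning_trees_def by auto
  then obtain \<phi> where \<phi>: "\<phi> \<in> parent_maps V E r" and "\<And>i. i \<in> V - {r} \<Longrightarrow> {i, \<phi> i} \<in> T"
    using parent_map_in_connected_subgraph[OF G \<open>r \<in> V\<close>] by metis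
  then have sub: "parent_tree V r \<phi> \<subseteq> T" unfolding parent_tree_def by blast
  have "e \<in> parent_tree V r \<phi>" if e: "e \<in> T" for e
  proof (rule ccontr)
    obtain x y where xy: "x \<in> V" "y \<in> V" "e = {x, y}"
      using simple_graph_edgeE[OF G] e \<open>T \<subseteq> E\<close> by blast
    assume "e \<notin> parent_tree V r \<phi>"
    then have "parent_tree V r \<phi> \<subseteq> T - {e}" using sub by blast
    moreover have "(adj (parent_tree V r \<phi>))\<^sup>*\<^sup>* x y"
      using parent_tree_connected[OF \<phi>] xy unfolding connected_on_def by blast
    ultimately have "(adj (T - {e}))\<^sup>*\<^sup>* x y" by (rule rtranclp_adj_mono)
    then show False using acyclic e xy unfolding acyclic_edges_def by blast
  qed
  then show ?thesis using that \<phi> sub by blast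
qed

lemma parent_tree_inj:
  assumes \<phi>: "\<phi> \<in> parent_maps V E r" and \<psi>: "\<psi> \<in> parent_maps V E r"
    and same_tree: "parent_tree V r \<phi> = parent_tree V r \<psi>"
  shows "\<phi> = \<psi>"
proof -
  let ?S = "V - {r}"
  obtain h :: "'a \<Rightarrow> nat" where h: "\<forall>i\<in>?S. \<psi> i \<in> ?S \<longrightarrow> h (\<psi> i) < h i"
    using parent_mapsD(3)[OF \<psi>] unfolding acyclic_map_def by blast
  have "\<phi> i = \<psi> i" if "i \<in> ?S" for i
    using that
  proof (induction "h i" arbitrary: i rule: less_induct)
    case less
    show ?case
    proof (rule ccontr)
      assume ne: "\<phi> i \<noteq> \<psi> i"
      have "{i, \<psi> i} \<in> parent_tree V r \<phi>"
        using same_tree less.prems unfolding parent_tree_def by blast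
      then obtain c where c: "c \<in> ?S" "{i, \<psi> i} = {c, \<phi> c}"
        unfolding parent_tree_def by blast
      \<comment> \<open>The edge from \<open>i\<close> to its \<open>\<psi>\<close>-parent is the \<open>\<phi>\<close>-edge of that parent, so
          \<open>\<phi> (\<psi> i) = i \<noteq> \<psi> (\<psi> i)\<close>, contradicting the induction hypothesis at \<open>\<psi> i\<close>.\<close>
      then have "c = \<psi> i" "\<phi> c = i" using ne by (auto simp: doubleton_eq_iff)
      then have "\<psi> i \<in> ?S" "h (\<psi> i) < h i" using c(1) h less.prems by auto
      moreover have "\<psi> (\<psi> i) \<noteq> i"
        using h less.prems \<open>\<psi> i \<in> ?S\<close> \<open>h (\<psi> i) < h i\<close> by (metis not_less_iff_gr_or_eq)
      ultimately show False using less.hyps \<open>c = \<psi> i\<close> \<open>\<phi> c = i\<close> by metis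
    qed
  qed
  moreover have "\<phi> \<in> extensional ?S" "\<psi> \<in> extensional ?S"
    using parent_mapsD(1)[OF \<phi>] parent_mapsD(1)[OF \<psi>] by (auto simp: PiE_def)
  ultimately show ?thesis by (intro extensionalityI[of _ ?S]) auto
qed

lemma bij_betw_parent_tree:
  assumes "simple_graph V E" "r \<in> V"
  shows "bij_betw (parent_tree V r) (parent_maps V E r) (spanning_trees V E)"
  unfolding bij_betw_def
proof
  show "inj_on (parent_tree V r) (parent_maps V E r)"
    by (rule inj_onI) (rule parent_tree_inj)
  show "parent_tree V r ` parent_maps V E r = spanning_trees V E"
  proof (intro equalityI subsetI)
    fix T assume "T \<in> spanning_trees V E"
    then obtain \<phi> where "\<phi> \<in> parent_maps V E r" "parent_tree V r \<phi> = T"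
      using spanning_tree_parent_map[OF assms] by blast
    then show "T \<in> parent_tree V r ` parent_maps V E r" by blast
  qed (auto simp: parent_tree_spanning)
qed

lemma laplacian_add_scaled:
  "laplacian V E (\<lambda>e. a e + t * b e) i j = laplacian V E a i j + t * laplacian V E b i j"
proof -
  have split: "(if {i, k} \<in> E then a {i, k} + t * b {i, k} else 0) =
      (if {i, k} \<in> E then a {i, k} else 0) + t * (if {i, k} \<in> E then b {i, k} else 0)" for k
    by simp
  show ?thesis
    unfolding laplacian_def Let_def split by (simp add: sum.distrib sum_distrib_left algebra_simps)
qed

lemma laplacian_cong:
  "(\<And>e. e \<in> E \<Longrightarrow> c e = c' e) \<Longrightarrow> laplacian V E c = laplacian V E c'"
  unfolding laplacian_def Let_def by (intro ext) (simp cong: sum.cong if_cong)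

lemma laplacian_eq_sum_rows:
  assumes "finite V" "j \<in> V"
  shows "laplacian V E c i j =
    (\<Sum>k\<in>V. (if {i, k} \<in> E then c {i, k} else 0) * ((if j = i then 1 else 0) - (if j = k then 1 else 0)))"
proof -
  let ?A = "\<lambda>k. if {i, k} \<in> E then c {i, k} else 0"
  have "(\<Sum>k\<in>V. ?A k * (if j = k then 1 else 0)) = (\<Sum>k\<in>V. if j = k then ?A k else 0)"
    by (intro sum.cong) auto
  also have "\<dots> = ?A j" using assms by simp
  finally have "(\<Sum>k\<in>V. ?A k * (if j = k then 1 else 0)) = ?A j" .
  then show ?thesis
    by (auto simp: laplacian_def right_diff_distrib sum_subtractf sum_distrib_right[symmetric])
qed

theorem matrix_tree:
  assumes G: "simple_graph V E" and "r \<in> V"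
  shows "sdet (V - {r}) (laplacian V E c) = (\<Sum>T\<in>spanning_trees V E. \<Prod>e\<in>T. c e)"
proof -
  let ?S = "V - {r}"
  have fin: "finite V" "finite ?S" using simple_graph_finite[OF G] by auto
  let ?A = "\<lambda>i k. if {i, k} \<in> E then c {i, k} else 0"
  let ?b = "\<lambda>i k j. (if j = i then 1 else 0) - (if j = k then 1 else 0 :: real)"
  have "sdet ?S (laplacian V E c) = sdet ?S (\<lambda>i j. \<Sum>k\<in>V. ?A i k * ?b i k j)"
    by (rule sdet_cong) (use laplacian_eq_sum_rows[OF fin(1)] in auto)
  also have "\<dots> = (\<Sum>\<phi>\<in>?S \<rightarrow>\<^sub>E V. (\<Prod>i\<in>?S. ?A i (\<phi> i)) * sdet ?S (\<lambda>i j. ?b i (\<phi> i) j))"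
    by (rule sdet_sum_rows[OF fin(2,1)])
  also have "\<dots> = (\<Sum>\<phi>\<in>?S \<rightarrow>\<^sub>E V. if \<phi> \<in> parent_maps V E r then \<Prod>i\<in>?S. c {i, \<phi> i} else 0)"
  proof (intro sum.cong refl)
    fix \<phi> assume \<phi>: "\<phi> \<in> ?S \<rightarrow>\<^sub>E V"
    show "(\<Prod>i\<in>?S. ?A i (\<phi> i)) * sdet ?S (\<lambda>i j. ?b i (\<phi> i) j) =
          (if \<phi> \<in> parent_maps V E r then \<Prod>i\<in>?S. c {i, \<phi> i} else 0)"
    proof (cases "\<forall>i\<in>?S. {i, \<phi> i} \<in> E")
      case True
      then have "\<phi> i \<noteq> i" if "i \<in> ?S" for i
        using that simple_graph_edgeD(3)[OF G, of i "\<phi> i"] by auto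
      then have "sdet ?S (\<lambda>i j. ?b i (\<phi> i) j) = (if acyclic_map ?S \<phi> then 1 else 0)"
        by (rule sdet_id_minus_parent_matrix[OF fin(2)])
      then show ?thesis using True \<phi> by (simp add: parent_maps_def)
    next
      case False
      then have "(\<Prod>i\<in>?S. ?A i (\<phi> i)) = 0" using fin(2) by (auto simp: prod_zero_iff)
      then show ?thesis using False by (auto simp: parent_maps_def)
    qed
  qed
  also have "\<dots> = (\<Sum>\<phi>\<in>parent_maps V E r. \<Prod>i\<in>?S. c {i, \<phi> i})"
    unfolding parent_maps_def using fin by (subst sum.inter_filter) (auto intro: finite_PiE)
  also have "\<dots> = (\<Sum>\<phi>\<in>parent_maps V E r. \<Prod>e\<in>parent_tree V r \<phi>. c e)"
    unfolding parent_tree_def by (intro sum.cong refl) (simp add: prod.reindex inj_on_parent_edge)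
  also have "\<dots> = (\<Sum>T\<in>spanning_trees V E. \<Prod>e\<in>T. c e)"
    by (rule sum.reindex_bij_betw[OF bij_betw_parent_tree[OF G \<open>r \<in> V\<close>]])
  finally show ?thesis .
qed

lemma spanning_trees_nonempty:
  assumes G: "simple_graph V E" and conn: "connected_on V E"
  shows "spanning_trees V E \<noteq> {}"
proof (cases "V = {}")
  case True
  then have "{} \<in> spanning_trees V E"
    unfolding spanning_trees_def connected_on_def acyclic_edges_def by simp
  then show ?thesis by blast
next
  case False
  then obtain r where "r \<in> V" by blast
  obtain \<phi> where "\<phi> \<in> parent_maps V E r"
    using parent_map_in_connected_subgraph[OF G \<open>r \<in> V\<close> subset_refl conn] by metis
  then have "parent_tree V r \<phi> \<in> spanning_trees V E" by (rule parent_tree_spanning)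
  then show ?thesis by blast
qed

lemma tree_weight_sum_pos:
  assumes G: "simple_graph V E" and "connected_on V E" and "\<forall>e\<in>E. w e > 0"
  shows "(\<Sum>T\<in>spanning_trees V E. tree_weight w T) > 0"
proof (rule sum_pos)
  show "finite (spanning_trees V E)" "spanning_trees V E \<noteq> {}"
    using finite_spanning_trees[OF G] spanning_trees_nonempty[OF G assms(2)] by auto
  show "tree_weight w T > 0" if "T \<in> spanning_trees V E" for T
    using that assms(3) unfolding tree_weight_def spanning_trees_def by (auto intro: prod_pos)
qed

section \<open>Sums over subsets of fixed size\<close>

lemma sum_Pow_eq_poly:
  fixes g :: "'a set \<Rightarrow> real"
  assumes "finite A" "card A \<le> n"
  shows "(\<Sum>K\<in>Pow A. t ^ card K * g K) = (\<Sum>k\<le>n. (\<Sum>K | K \<subseteq> A \<and> card K = k. g K) * t ^ k)"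
proof -
  have "(\<Sum>K | K \<subseteq> A \<and> card K = k. g K) * t ^ k =
        (\<Sum>K\<in>Pow A. if card K = k then t ^ card K * g K else 0)" for k
  proof -
    have "(\<Sum>K | K \<subseteq> A \<and> card K = k. g K) = (\<Sum>K\<in>Pow A. if card K = k then g K else 0)"
      using sum.inter_filter[of "Pow A" g "\<lambda>K. card K = k"] assms(1) by (simp add: Pow_def)
    then show ?thesis by (auto simp: sum_distrib_right intro!: sum.cong)
  qed
  then have "(\<Sum>k\<le>n. (\<Sum>K | K \<subseteq> A \<and> card K = k. g K) * t ^ k) =
        (\<Sum>k\<le>n. \<Sum>K\<in>Pow A. if card K = k then t ^ card K * g K else 0)"
    by simp
  also have "\<dots> = (\<Sum>K\<in>Pow A. t ^ card K * g K)"
    using assms by (subst sum.swap) (auto intro!: sum.cong dest: card_mono)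
  finally show ?thesis ..
qed

lemma sum_card_1_subsets:
  "finite A \<Longrightarrow> (\<Sum>K | K \<subseteq> A \<and> card K = 1. g K) = (\<Sum>a\<in>A. g {a})"
  by (rule sum.reindex_bij_betw[symmetric]) (auto simp: bij_betw_def card_1_singleton_iff)

lemma sum_card_2_subsets:
  fixes g :: "'a set \<Rightarrow> real"
  assumes "finite A"
  shows "2 * (\<Sum>K | K \<subseteq> A \<and> card K = 2. g K) = (\<Sum>a\<in>A. \<Sum>b\<in>A - {a}. g {a, b})"
proof -
  let ?pairs = "SIGMA a:A. A - {a}"
  let ?K = "{K. K \<subseteq> A \<and> card K = 2}"
  have "(\<lambda>(a, b). {a, b}) ` ?pairs \<subseteq> ?K"
    by (auto simp: card_2_iff)
  then have "(\<Sum>K\<in>?K. \<Sum>p | p \<in> ?pairs \<and> (\<lambda>(a, b). {a, b}) p = K. (\<lambda>(a, b). g {a, b}) p) =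
      (\<Sum>a\<in>A. \<Sum>b\<in>A - {a}. g {a, b})"
    using assms by (subst sum.group) (auto simp: sum.Sigma)
  moreover have "(\<Sum>K\<in>?K. \<Sum>p | p \<in> ?pairs \<and> (\<lambda>(a, b). {a, b}) p = K. (\<lambda>(a, b). g {a, b}) p) =
      (\<Sum>K\<in>?K. 2 * g K)"
  proof (intro sum.cong refl)
    fix K assume "K \<in> ?K"
    then obtain a b where "K = {a, b}" "a \<noteq> b" "a \<in> A" "b \<in> A" by (auto simp: card_2_iff)
    moreover from this have "{p. p \<in> ?pairs \<and> (\<lambda>(a, b). {a, b}) p = K} = {(a, b), (b, a)}"
      by (auto simp: doubleton_eq_iff)
    ultimately show "(\<Sum>p | p \<in> ?pairs \<and> (\<lambda>(a, b). {a, b}) p = K. (\<lambda>(a, b). g {a, b}) p) = 2 * g K"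
      by (simp add: insert_commute)
  qed
  ultimately show ?thesis by (simp add: sum_distrib_left)
qed

lemma sum_offdiagonal:
  fixes f :: "'a \<Rightarrow> 'a \<Rightarrow> real"
  assumes "finite A"
  shows "(\<Sum>a\<in>A. \<Sum>b\<in>A - {a}. f a b) = (\<Sum>a\<in>A. \<Sum>b\<in>A. f a b) - (\<Sum>a\<in>A. f a a)"
  using assms by (simp add: sum_diff1 sum_subtractf)

lemma sum_card_2_subsets_prod:
  fixes s :: "'a \<Rightarrow> real"
  assumes "finite A"
  shows "2 * (\<Sum>F | F \<subseteq> A \<and> card F = 2. \<Prod>e\<in>F. s e) = (\<Sum>e\<in>A. s e)\<^sup>2 - (\<Sum>e\<in>A. (s e)\<^sup>2)"
proof -
  have "2 * (\<Sum>F | F \<subseteq> A \<and> card F = 2. \<Prod>e\<in>F. s e) = (\<Sum>a\<in>A. \<Sum>b\<in>A - {a}. s a * s b)"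
    unfolding sum_card_2_subsets[OF assms] by (intro sum.cong refl) auto
  also have "\<dots> = (\<Sum>e\<in>A. s e)\<^sup>2 - (\<Sum>e\<in>A. (s e)\<^sup>2)"
    using assms by (simp add: sum_offdiagonal power2_eq_square sum_product)
  finally show ?thesis .
qed

lemma sum_card_2_principal_minors:
  assumes "finite A"
  shows "2 * (\<Sum>K | K \<subseteq> A \<and> card K = 2. sdet K C) =
    (\<Sum>i\<in>A. C i i)\<^sup>2 - (\<Sum>i\<in>A. \<Sum>j\<in>A. C i j * C j i)"
proof -
  have "2 * (\<Sum>K | K \<subseteq> A \<and> card K = 2. sdet K C) =
      (\<Sum>i\<in>A. \<Sum>j\<in>A - {i}. C i i * C j j - C i j * C j i)"
    unfolding sum_card_2_subsets[OF assms] by (intro sum.cong refl) (auto simp: sdet_doubleton)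
  also have "\<dots> = (\<Sum>i\<in>A. C i i)\<^sup>2 - (\<Sum>i\<in>A. \<Sum>j\<in>A. C i j * C j i)"
    using assms by (simp add: sum_offdiagonal sum_subtractf power2_eq_square sum_product)
  finally show ?thesis .
qed

lemma prod_scaled_one_plus:
  fixes s w :: "'a \<Rightarrow> real"
  assumes "finite T"
  shows "(\<Prod>e\<in>T. w e * (1 + t * s e)) = (\<Prod>e\<in>T. w e) * (\<Sum>F\<in>Pow T. t ^ card F * (\<Prod>e\<in>F. s e))"
proof -
  have "(\<Prod>e\<in>T. 1 + t * s e) = (\<Sum>F\<in>Pow T. (\<Prod>e\<in>F. t * s e) * (\<Prod>e\<in>T - F. 1))"
    using prod_add[OF assms, of "\<lambda>e. t * s e" "\<lambda>_. 1"] by (simp add: add.commute)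
  then show ?thesis by (simp add: prod.distrib)
qed

section \<open>Moments of edge sums over the random spanning tree\<close>

lemma rst_expectation_cong:
  "(\<And>T. T \<in> spanning_trees V E \<Longrightarrow> f T = g T) \<Longrightarrow> rst_expectation V E w f = rst_expectation V E w g"
  unfolding rst_expectation_def by simp

lemma rst_covariance_cong:
  assumes "\<And>T. T \<in> spanning_trees V E \<Longrightarrow> f T = f' T" "\<And>T. T \<in> spanning_trees V E \<Longrightarrow> g T = g' T"
  shows "rst_covariance V E w f g = rst_covariance V E w f' g'"
  unfolding rst_covariance_def
  using rst_expectation_cong[of V E f f' w] rst_expectation_cong[of V E g g' w] assms
  by (intro rst_expectation_cong) auto

lemma rst_variance_eq_covariance: "rst_variance V E w f = rst_covariance V E w f f"
  unfolding rst_variance_def rst_covariance_def by (simp add: power2_eq_square)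

lemma rst_covariance_eq:
  assumes "(\<Sum>T\<in>spanning_trees V E. tree_weight w T) \<noteq> 0"
  shows "rst_covariance V E w f g =
    rst_expectation V E w (\<lambda>T. f T * g T) - rst_expectation V E w f * rst_expectation V E w g"
proof -
  let ?ST = "spanning_trees V E"
  define Z where "Z = (\<Sum>T\<in>?ST. tree_weight w T)"
  define \<mu> where "\<mu> = rst_expectation V E w f"
  define \<nu> where "\<nu> = rst_expectation V E w g"
  have "Z \<noteq> 0" using assms unfolding Z_def .
  have expectation: "rst_expectation V E w h = (\<Sum>T\<in>?ST. tree_weight w T * h T) / Z" for h
    unfolding rst_expectation_def Z_def ..
  have "rst_covariance V E w f g = (\<Sum>T\<in>?ST. tree_weight w T * ((f T - \<mu>) * (g T - \<nu>))) / Z"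
    unfolding rst_covariance_def \<mu>_def[symmetric] \<nu>_def[symmetric] by (simp only: expectation)
  moreover have "(\<Sum>T\<in>?ST. tree_weight w T * ((f T - \<mu>) * (g T - \<nu>))) =
      (\<Sum>T\<in>?ST. tree_weight w T * (f T * g T)) - \<mu> * (\<Sum>T\<in>?ST. tree_weight w T * g T)
        - \<nu> * (\<Sum>T\<in>?ST. tree_weight w T * f T) + \<mu> * \<nu> * Z"
    unfolding Z_def by (simp add: algebra_simps sum.distrib sum_subtractf sum_distrib_left)
  moreover have "(\<Sum>T\<in>?ST. tree_weight w T * f T) = \<mu> * Z" "(\<Sum>T\<in>?ST. tree_weight w T * g T) = \<nu> * Z"
    using \<open>Z \<noteq> 0\<close> unfolding \<mu>_def \<nu>_def expectation by simp_all
  ultimately show ?thesis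
    using \<open>Z \<noteq> 0\<close> unfolding expectation[of "\<lambda>T. f T * g T"] \<mu>_def[symmetric] \<nu>_def[symmetric]
    by (simp add: diff_divide_distrib add_divide_distrib)
qed

lemma wdeg_eq_edge_sum: "finite T \<Longrightarrow> wdeg \<omega> T v = (\<Sum>e\<in>T. if v \<in> e then \<omega> e else 0)"
  unfolding wdeg_def by (rule sum.inter_filter)

locale tree_weighted_graph =
  fixes V :: "'a set" and E :: "'a set set" and w :: "'a set \<Rightarrow> real" and r :: 'a
  assumes graph: "simple_graph V E" and root: "r \<in> V"
    and total_weight_nonzero: "(\<Sum>T\<in>spanning_trees V E. tree_weight w T) \<noteq> 0"
begin

definition total_weight :: real where
  "total_weight = (\<Sum>T\<in>spanning_trees V E. tree_weight w T)"

(* The matrix C_s = (L^[r])^-1 L_s^[r] of the proof idea, L_s having the edge weights w e * s e. *)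
definition relative_laplacian :: "('a set \<Rightarrow> real) \<Rightarrow> 'a smat" where
  "relative_laplacian s =
     smat_mult (V - {r}) (smat_inv (V - {r}) (laplacian V E w)) (laplacian V E (\<lambda>e. w e * s e))"

lemma finite_reduced_vertices: "finite (V - {r})"
  using simple_graph_finite[OF graph] by simp

lemma sdet_laplacian: "sdet (V - {r}) (laplacian V E w) = total_weight"
  unfolding total_weight_def tree_weight_def by (rule matrix_tree[OF graph root])

lemma laplacian_mult_relative_laplacian:
  assumes "i \<in> V - {r}"
  shows "smat_mult (V - {r}) (laplacian V E w) (relative_laplacian s) i j =
    laplacian V E (\<lambda>e. w e * s e) i j"
proof -
  let ?S = "V - {r}"
  let ?L = "laplacian V E w"
  have "smat_mult ?S ?L (smat_inv ?S ?L) i k = (if i = k then 1 else 0)" if "k \<in> ?S" for k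
    using smat_inv_right_inverse[OF finite_reduced_vertices] sdet_laplacian total_weight_nonzero assms that
    by (simp add: total_weight_def smat_mult_def)
  then have "smat_mult ?S (smat_mult ?S ?L (smat_inv ?S ?L)) (laplacian V E (\<lambda>e. w e * s e)) i j =
      smat_mult ?S (\<lambda>i j. if i = j then 1 else 0) (laplacian V E (\<lambda>e. w e * s e)) i j"
    unfolding smat_mult_def[of ?S "smat_mult ?S _ _"] smat_mult_def[of ?S "\<lambda>i j. if i = j then 1 else 0"]
    by (intro sum.cong) auto
  then show ?thesis
    unfolding relative_laplacian_def smat_mult_assoc[symmetric]
    using smat_mult_id_left[OF finite_reduced_vertices assms] by simp
qed

lemma sdet_perturbed_laplacian:
  "sdet (V - {r}) (laplacian V E (\<lambda>e. w e * (1 + t * s e))) =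
    total_weight * (\<Sum>K\<in>Pow (V - {r}). t ^ card K * sdet K (relative_laplacian s))"
proof -
  let ?S = "V - {r}"
  let ?I = "\<lambda>i j. if i = j then 1 else 0 :: real"
  have "laplacian V E (\<lambda>e. w e * (1 + t * s e)) i j =
      smat_mult ?S (laplacian V E w) (\<lambda>i j. ?I i j + t * relative_laplacian s i j) i j"
    if "i \<in> ?S" "j \<in> ?S" for i j
  proof -
    have "laplacian V E (\<lambda>e. w e * (1 + t * s e)) i j =
        laplacian V E w i j + t * laplacian V E (\<lambda>e. w e * s e) i j"
      using laplacian_add_scaled[of V E w t "\<lambda>e. w e * s e"] by (simp add: algebra_simps)
    also have "\<dots> = smat_mult ?S (laplacian V E w) ?I i j +
        t * smat_mult ?S (laplacian V E w) (relative_laplacian s) i j"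
      using that smat_mult_id_right[OF finite_reduced_vertices \<open>j \<in> ?S\<close>]
      by (simp add: laplacian_mult_relative_laplacian)
    finally show ?thesis
      by (simp add: smat_mult_def sum.distrib sum_distrib_left algebra_simps)
  qed
  then have "sdet ?S (laplacian V E (\<lambda>e. w e * (1 + t * s e))) =
      sdet ?S (smat_mult ?S (laplacian V E w) (\<lambda>i j. ?I i j + t * relative_laplacian s i j))"
    by (rule sdet_cong)
  also have "\<dots> = sdet ?S (laplacian V E w) * sdet ?S (\<lambda>i j. ?I i j + t * relative_laplacian s i j)"
    by (rule sdet_mult[OF finite_reduced_vertices])
  finally show ?thesis
    by (simp only: sdet_laplacian sdet_id_plus_eq_sum_principal_minors[OF finite_reduced_vertices])
qed

lemma finite_tree:
  "T \<in> spanning_trees V E \<Longrightarrow> finite T"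
  by (rule finite_spanning_tree[OF graph])

lemma tree_generating_polynomial:
  "total_weight * (\<Sum>K\<in>Pow (V - {r}). t ^ card K * sdet K (relative_laplacian s)) =
    (\<Sum>T\<in>spanning_trees V E. tree_weight w T * (\<Sum>F\<in>Pow T. t ^ card F * (\<Prod>e\<in>F. s e)))"
  unfolding sdet_perturbed_laplacian[symmetric] matrix_tree[OF graph root]
  by (intro sum.cong refl) (simp add: finite_tree prod_scaled_one_plus tree_weight_def)

lemma principal_minor_sum_eq:
  "total_weight * (\<Sum>K | K \<subseteq> V - {r} \<and> card K = k. sdet K (relative_laplacian s)) =
    (\<Sum>T\<in>spanning_trees V E. tree_weight w T * (\<Sum>F | F \<subseteq> T \<and> card F = k. \<Prod>e\<in>F. s e))"
proof -
  let ?S = "V - {r}" and ?ST = "spanning_trees V E"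
  define n where "n = card ?S + card E + k"
  define minors where "minors i = (\<Sum>K | K \<subseteq> ?S \<and> card K = i. sdet K (relative_laplacian s))" for i
  define edge_prods where "edge_prods T i = (\<Sum>F | F \<subseteq> T \<and> card F = i. \<Prod>e\<in>F. s e)" for T i
  have same_polynomial: "(\<Sum>i\<le>n. (total_weight * minors i) * t ^ i) =
      (\<Sum>i\<le>n. (\<Sum>T\<in>?ST. tree_weight w T * edge_prods T i) * t ^ i)" for t
  proof -
    have "(\<Sum>K\<in>Pow ?S. t ^ card K * sdet K (relative_laplacian s)) = (\<Sum>i\<le>n. minors i * t ^ i)"
      unfolding minors_def by (rule sum_Pow_eq_poly[OF finite_reduced_vertices]) (simp add: n_def)
    then have "(\<Sum>i\<le>n. (total_weight * minors i) * t ^ i) =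
        total_weight * (\<Sum>K\<in>Pow ?S. t ^ card K * sdet K (relative_laplacian s))"
      by (simp add: sum_distrib_left mult.assoc)
    also have "\<dots> = (\<Sum>T\<in>?ST. tree_weight w T * (\<Sum>F\<in>Pow T. t ^ card F * (\<Prod>e\<in>F. s e)))"
      by (rule tree_generating_polynomial)
    also have "\<dots> = (\<Sum>T\<in>?ST. \<Sum>i\<le>n. tree_weight w T * edge_prods T i * t ^ i)"
    proof (intro sum.cong refl)
      fix T assume T: "T \<in> ?ST"
      then have "card T \<le> n"
        using card_mono[OF simple_graph_finite_edges[OF graph], of T]
        by (auto simp: n_def spanning_trees_def)
      then show "tree_weight w T * (\<Sum>F\<in>Pow T. t ^ card F * (\<Prod>e\<in>F. s e)) =
          (\<Sum>i\<le>n. tree_weight w T * edge_prods T i * t ^ i)"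
        using sum_Pow_eq_poly[OF finite_tree[OF T] \<open>card T \<le> n\<close>, where g = "\<lambda>F. \<Prod>e\<in>F. s e" and t = t]
        unfolding edge_prods_def[symmetric] by (simp add: sum_distrib_left mult.assoc)
    qed
    also have "\<dots> = (\<Sum>i\<le>n. (\<Sum>T\<in>?ST. tree_weight w T * edge_prods T i) * t ^ i)"
      by (subst sum.swap) (simp add: sum_distrib_right)
    finally show ?thesis .
  qed
  have "total_weight * minors k = (\<Sum>T\<in>?ST. tree_weight w T * edge_prods T k)"
    using polyfun_eq_coeffs[of "\<lambda>i. total_weight * minors i" n "\<lambda>i. \<Sum>T\<in>?ST. tree_weight w T * edge_prods T i"]
      same_polynomial by (simp add: n_def)
  then show ?thesis unfolding minors_def edge_prods_def .
qed

lemma first_moment: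
  "(\<Sum>T\<in>spanning_trees V E. tree_weight w T * (\<Sum>e\<in>T. s e)) =
    total_weight * (\<Sum>i\<in>V - {r}. relative_laplacian s i i)"
proof -
  have "(\<Sum>T\<in>spanning_trees V E. tree_weight w T * (\<Sum>e\<in>T. s e)) =
      (\<Sum>T\<in>spanning_trees V E. tree_weight w T * (\<Sum>F | F \<subseteq> T \<and> card F = 1. \<Prod>e\<in>F. s e))"
    by (intro sum.cong refl) (subst sum_card_1_subsets, auto simp: finite_tree)
  also have "\<dots> = total_weight * (\<Sum>K | K \<subseteq> V - {r} \<and> card K = 1. sdet K (relative_laplacian s))"
    by (rule principal_minor_sum_eq[symmetric])
  also have "\<dots> = total_weight * (\<Sum>i\<in>V - {r}. relative_laplacian s i i)"
    using finite_reduced_vertices by (subst sum_card_1_subsets) (auto simp: sdet_singleton)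
  finally show ?thesis .
qed

lemma second_moment:
  "(\<Sum>T\<in>spanning_trees V E. tree_weight w T * ((\<Sum>e\<in>T. s e)\<^sup>2 - (\<Sum>e\<in>T. (s e)\<^sup>2))) =
    total_weight * ((\<Sum>i\<in>V - {r}. relative_laplacian s i i)\<^sup>2 -
      (\<Sum>i\<in>V - {r}. \<Sum>j\<in>V - {r}. relative_laplacian s i j * relative_laplacian s j i))"
proof -
  have "(\<Sum>T\<in>spanning_trees V E. tree_weight w T * ((\<Sum>e\<in>T. s e)\<^sup>2 - (\<Sum>e\<in>T. (s e)\<^sup>2))) =
      2 * (\<Sum>T\<in>spanning_trees V E. tree_weight w T * (\<Sum>F | F \<subseteq> T \<and> card F = 2. \<Prod>e\<in>F. s e))"
    unfolding sum_distrib_left[of 2]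
    by (intro sum.cong refl)
      (simp only: sum_card_2_subsets_prod[OF finite_tree, symmetric] mult.left_commute)
  also have "\<dots> = total_weight * (2 * (\<Sum>K | K \<subseteq> V - {r} \<and> card K = 2. sdet K (relative_laplacian s)))"
    by (simp only: principal_minor_sum_eq[symmetric] mult.left_commute)
  finally show ?thesis
    by (simp only: sum_card_2_principal_minors[OF finite_reduced_vertices])
qed

lemma relative_laplacian_add:
  "relative_laplacian (\<lambda>e. a e + b e) i j = relative_laplacian a i j + relative_laplacian b i j"
proof -
  have "laplacian V E (\<lambda>e. w e * (a e + b e)) k j =
      laplacian V E (\<lambda>e. w e * a e) k j + laplacian V E (\<lambda>e. w e * b e) k j" for k
    using laplacian_add_scaled[of V E "\<lambda>e. w e * a e" 1 "\<lambda>e. w e * b e" k j]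
    by (simp add: distrib_left)
  then show ?thesis
    unfolding relative_laplacian_def smat_mult_def by (simp add: distrib_left sum.distrib)
qed

lemma mixed_second_moment:
  "(\<Sum>T\<in>spanning_trees V E. tree_weight w T *
      ((\<Sum>e\<in>T. a e) * (\<Sum>e\<in>T. b e) - (\<Sum>e\<in>T. a e * b e))) =
    total_weight * ((\<Sum>i\<in>V - {r}. relative_laplacian a i i) * (\<Sum>i\<in>V - {r}. relative_laplacian b i i) -
      (\<Sum>i\<in>V - {r}. \<Sum>j\<in>V - {r}. relative_laplacian a i j * relative_laplacian b j i))"
    (is "?lhs a b = total_weight * ?rhs a b")
proof -
  let ?S = "V - {r}"
  have quadratic: "?lhs s s = total_weight * ?rhs s s" for s
    using second_moment[of s] by (simp add: power2_eq_square)
  \<comment> \<open>Polarization: both sides are symmetric bilinear forms in the edge functions.\<close>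
  have lhs_polar: "?lhs (\<lambda>e. a e + b e) (\<lambda>e. a e + b e) = ?lhs a a + ?lhs b b + 2 * ?lhs a b"
    unfolding sum_distrib_left[of 2] sum.distrib[symmetric]
    by (intro sum.cong refl) (simp add: sum.distrib algebra_simps sum_distrib_left)
  have rhs_polar: "?rhs (\<lambda>e. a e + b e) (\<lambda>e. a e + b e) = ?rhs a a + ?rhs b b + 2 * ?rhs a b"
  proof -
    have "(\<Sum>i\<in>?S. \<Sum>j\<in>?S. relative_laplacian b i j * relative_laplacian a j i) =
        (\<Sum>i\<in>?S. \<Sum>j\<in>?S. relative_laplacian a i j * relative_laplacian b j i)"
      by (subst sum.swap) (simp add: mult.commute)
    then show ?thesis
      by (simp add: relative_laplacian_add sum.distrib algebra_simps)
  qed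
  have "2 * ?lhs a b =
      total_weight * ?rhs (\<lambda>e. a e + b e) (\<lambda>e. a e + b e) - total_weight * ?rhs a a - total_weight * ?rhs b b"
    using lhs_polar quadratic[of a] quadratic[of b] quadratic[of "\<lambda>e. a e + b e"] by linarith
  also have "\<dots> = total_weight * (?rhs (\<lambda>e. a e + b e) (\<lambda>e. a e + b e) - ?rhs a a - ?rhs b b)"
    by (simp only: right_diff_distrib)
  also have "\<dots> = 2 * (total_weight * ?rhs a b)"
    using rhs_polar by (simp only: mult.left_commute[of total_weight 2]) simp
  finally show ?thesis by simp
qed

lemma rst_expectation_eqI:
  "(\<Sum>T\<in>spanning_trees V E. tree_weight w T * f T) = total_weight * \<mu> \<Longrightarrow> rst_expectation V E w f = \<mu>"
  using total_weight_nonzero unfolding rst_expectation_def total_weight_def by simp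

lemma trace_relative_laplacian:
  "(\<Sum>i\<in>V - {r}. relative_laplacian s i i) =
    smat_trace (V - {r})
      (smat_mult (V - {r}) (laplacian V E (\<lambda>e. w e * s e)) (smat_inv (V - {r}) (laplacian V E w)))"
proof -
  have "(\<Sum>i\<in>V - {r}. relative_laplacian s i i) = smat_trace (V - {r}) (relative_laplacian s)"
    unfolding smat_trace_def ..
  then show ?thesis
    unfolding relative_laplacian_def smat_trace_mult_commute[of "V - {r}" "smat_inv _ _"] .
qed

lemma trace_relative_laplacian_product:
  fixes a b :: "'a set \<Rightarrow> real"
  defines "N \<equiv> smat_inv (V - {r}) (laplacian V E w)"
  shows "(\<Sum>i\<in>V - {r}. \<Sum>j\<in>V - {r}. relative_laplacian a i j * relative_laplacian b j i) =
    smat_trace (V - {r}) (smat_mult (V - {r})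
      (smat_mult (V - {r}) (smat_mult (V - {r}) (laplacian V E (\<lambda>e. w e * a e)) N)
         (laplacian V E (\<lambda>e. w e * b e)))
      N)"
proof -
  let ?S = "V - {r}"
  let ?La = "laplacian V E (\<lambda>e. w e * a e)" and ?Lb = "laplacian V E (\<lambda>e. w e * b e)"
  have "(\<Sum>i\<in>?S. \<Sum>j\<in>?S. relative_laplacian a i j * relative_laplacian b j i) =
      smat_trace ?S (smat_mult ?S (relative_laplacian a) (relative_laplacian b))"
    unfolding smat_trace_def smat_mult_def ..
  also have "\<dots> = smat_trace ?S (smat_mult ?S N (smat_mult ?S ?La (smat_mult ?S N ?Lb)))"
    unfolding relative_laplacian_def N_def smat_mult_assoc ..
  also have "\<dots> = smat_trace ?S (smat_mult ?S (smat_mult ?S ?La (smat_mult ?S N ?Lb)) N)"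
    by (rule smat_trace_mult_commute)
  finally show ?thesis by (simp only: smat_mult_assoc)
qed

lemma rst_expectation_edge_sum:
  "rst_expectation V E w (\<lambda>T. \<Sum>e\<in>T. s e) =
    smat_trace (V - {r})
      (smat_mult (V - {r}) (laplacian V E (\<lambda>e. w e * s e)) (smat_inv (V - {r}) (laplacian V E w)))"
  using first_moment trace_relative_laplacian by (intro rst_expectation_eqI) simp

lemma rst_covariance_edge_sums:
  defines "N \<equiv> smat_inv (V - {r}) (laplacian V E w)"
  shows "rst_covariance V E w (\<lambda>T. \<Sum>e\<in>T. a e) (\<lambda>T. \<Sum>e\<in>T. b e) =
    smat_trace (V - {r}) (smat_mult (V - {r})
      (smat_minus (laplacian V E (\<lambda>e. w e * (a e * b e)))
         (smat_mult (V - {r}) (smat_mult (V - {r}) (laplacian V E (\<lambda>e. w e * a e)) N)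
            (laplacian V E (\<lambda>e. w e * b e))))
      N)"
proof -
  let ?tr = "\<lambda>s. \<Sum>i\<in>V - {r}. relative_laplacian s i i"
  let ?X = "\<Sum>i\<in>V - {r}. \<Sum>j\<in>V - {r}. relative_laplacian a i j * relative_laplacian b j i"
  have "(\<Sum>T\<in>spanning_trees V E. tree_weight w T * ((\<Sum>e\<in>T. a e) * (\<Sum>e\<in>T. b e))) =
      (\<Sum>T\<in>spanning_trees V E. tree_weight w T *
        ((\<Sum>e\<in>T. a e) * (\<Sum>e\<in>T. b e) - (\<Sum>e\<in>T. a e * b e))) +
      (\<Sum>T\<in>spanning_trees V E. tree_weight w T * (\<Sum>e\<in>T. a e * b e))"
    by (simp add: sum.distrib[symmetric] algebra_simps)
  also have "\<dots> = total_weight * (?tr a * ?tr b - ?X + ?tr (\<lambda>e. a e * b e))"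
    by (simp only: mixed_second_moment first_moment distrib_left)
  finally have "rst_expectation V E w (\<lambda>T. (\<Sum>e\<in>T. a e) * (\<Sum>e\<in>T. b e)) =
      ?tr a * ?tr b - ?X + ?tr (\<lambda>e. a e * b e)"
    by (rule rst_expectation_eqI)
  moreover have "rst_expectation V E w (\<lambda>T. \<Sum>e\<in>T. s e) = ?tr s" for s
    using first_moment by (rule rst_expectation_eqI)
  ultimately show ?thesis
    using total_weight_nonzero
    by (simp add: rst_covariance_eq smat_trace_mult_minus_left trace_relative_laplacian
        trace_relative_laplacian_product N_def)
qed

end

theorem theorem3:
  fixes V :: "'a set" and E :: "'a set set" and w \<omega> :: "'a set \<Rightarrow> real" and r v :: 'a
  assumes graph: "simple_graph V E"
    and conn: "connected_on V E"
    and wpos: "\<forall>e\<in>E. w e > 0"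
    and r: "r \<in> V"
    and v: "v \<in> V"
  shows "rst_expectation V E w (\<lambda>T. wdeg \<omega> T v)
           = smat_trace (V - {r})
               (smat_mult (V - {r}) (lap_v V E w \<omega> 1 v) (smat_inv (V - {r}) (lap_G V E w)))
       \<and> rst_variance V E w (\<lambda>T. wdeg \<omega> T v)
           = smat_trace (V - {r})
               (smat_mult (V - {r})
                 (smat_minus (lap_v V E w \<omega> 2 v)
                    (smat_mult (V - {r})
                       (smat_mult (V - {r}) (lap_v V E w \<omega> 1 v) (smat_inv (V - {r}) (lap_G V E w)))
                       (lap_v V E w \<omega> 1 v)))
                 (smat_inv (V - {r}) (lap_G V E w)))
       \<and> (\<forall>u\<in>V. u \<noteq> v \<longrightarrow>
           rst_covariance V E w (\<lambda>T. wdeg \<omega> T v) (\<lambda>T. wdeg \<omega> T u)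
           = smat_trace (V - {r})
               (smat_mult (V - {r})
                 (smat_minus (lap_vu V E w \<omega> v u)
                    (smat_mult (V - {r})
                       (smat_mult (V - {r}) (lap_v V E w \<omega> 1 v) (smat_inv (V - {r}) (lap_G V E w)))
                       (lap_v V E w \<omega> 1 u)))
                 (smat_inv (V - {r}) (lap_G V E w))))"
proof -
  interpret tree_weighted_graph V E w r
    using graph r tree_weight_sum_pos[OF graph conn wpos] by unfold_locales auto
  define incident where "incident x e = (if x \<in> e then \<omega> e else 0)" for x e
  have wdeg: "wdeg \<omega> T x = (\<Sum>e\<in>T. incident x e)" if "T \<in> spanning_trees V E" for T x
    unfolding incident_def by (rule wdeg_eq_edge_sum[OF finite_tree[OF that]])
  have lap_v: "lap_v V E w \<omega> 1 x = laplacian V E (\<lambda>e. w e * incident x e)"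
    "lap_v V E w \<omega> 2 x = laplacian V E (\<lambda>e. w e * (incident x e * incident x e))" for x
    unfolding lap_v_def incident_def
    by (auto simp: power2_eq_square intro!: arg_cong[of _ _ "laplacian V E"])
  have lap_vu: "lap_vu V E w \<omega> v u = laplacian V E (\<lambda>e. w e * (incident v e * incident u e))"
    if "u \<noteq> v" for u
    unfolding lap_vu_def incident_def using that
    by (intro laplacian_cong) (auto simp: power2_eq_square elim!: simple_graph_edgeE[OF graph])
  have "rst_expectation V E w (\<lambda>T. wdeg \<omega> T v) = rst_expectation V E w (\<lambda>T. \<Sum>e\<in>T. incident v e)"
    by (rule rst_expectation_cong) (simp add: wdeg)
  moreover have "rst_covariance V E w (\<lambda>T. wdeg \<omega> T v) (\<lambda>T. wdeg \<omega> T u) =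
      rst_covariance V E w (\<lambda>T. \<Sum>e\<in>T. incident v e) (\<lambda>T. \<Sum>e\<in>T. incident u e)" for u
    by (rule rst_covariance_cong) (simp_all add: wdeg)
  ultimately show ?thesis
    unfolding rst_variance_eq_covariance lap_G_def lap_v
    by (simp add: lap_vu rst_expectation_edge_sum rst_covariance_edge_sums)
qed

end
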